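(* Let $d\ge2$. There is a constant $C_d>0$ depending only on $d$ such that for all finite sets $X,Y\subset\mathbb{Z}^d$, $$\#(X\setminus Y)\le|\zeta(X)\setminus\zeta(Y)|+C_dP(Y),\qquad\text{and hence}\qquad \#(X\,\Delta\,Y)\le|\zeta(X)\,\Delta\,\zeta(Y)|+C_d\big(P(X)+P(Y)\big).$$
   Context: For $X\subset\mathbb{Z}^d$ and $p\in X$, $\mathrm{val}(p)=\#\{q\in\mathbb{Z}^d\setminus X:|p-q|=1\}$ and $P(X)=\sum_{p\in X}\mathrm{val}(p)$. Kuhn decomposition: for a permutation $\pi$ of $\{1,\dots,d\}$, $T_\pi=\{x\in\mathbb{R}^d:0\le x_{\pi(d)}\le\dots\le x_{\pi(1)}\le1\}$, $\mathcal{T}=\{z+T_\pi:z\in\mathbb{Z}^d,\pi\}$, $\mathcal T(i)=\{T\in\mathcal T:i\in T\}$, and $\zeta(X)=\bigcup_{i\in X}\bigcup_{T\in\mathcal T(i)}T$. $|\cdot|$ is Lebesgue measure, $\#$ cardinality, $\Delta$ symmetric difference. *)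

theory Defs
  imports "HOL-Analysis.Analysis"
begin

text \<open>Points of Z^d are vectors int^'n; d = CARD('n). Embedding into R^d.\<close>
definition of_intvec :: "int^'n \<Rightarrow> real^'n" where
  "of_intvec z = (\<chi> i. real_of_int (z $ i))"

definition lattice_val :: "(int^'n) set \<Rightarrow> int^'n \<Rightarrow> nat" where
  "lattice_val X p = card {q. q \<notin> X \<and> norm (of_intvec p - of_intvec q) = 1}"

definition lattice_perimeter :: "(int^'n) set \<Rightarrow> nat" where
  "lattice_perimeter X = (\<Sum>p\<in>X. lattice_val X p)"

text \<open>Kuhn simplex for a permutation, encoded as a bijection sigma from {0..<d} onto the
  index type: sigma i plays the role of pi(i+1). T = {x. 0 <= x_(pi d) <= ... <= x_(pi 1) <= 1}.\<close>
definition kuhn_simplex :: "(nat \<Rightarrow> 'n::finite) \<Rightarrow> (real^'n) set" where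
  "kuhn_simplex \<sigma> = {x. 0 \<le> x $ (\<sigma> (CARD('n) - 1)) \<and> x $ (\<sigma> 0) \<le> 1 \<and>
      (\<forall>i. Suc i < CARD('n) \<longrightarrow> x $ (\<sigma> (Suc i)) \<le> x $ (\<sigma> i))}"

definition kuhn_tiles :: "(real^'n::finite) set set" where
  "kuhn_tiles = {(\<lambda>x. of_intvec z + x) ` kuhn_simplex \<sigma> | z \<sigma>.
      bij_betw \<sigma> {..<CARD('n)} (UNIV :: 'n set)}"

definition kuhn_tiles_at :: "int^'n::finite \<Rightarrow> (real^'n) set set" where
  "kuhn_tiles_at i = {T \<in> kuhn_tiles. of_intvec i \<in> T}"

definition zeta :: "(int^'n::finite) set \<Rightarrow> (real^'n) set" where
  "zeta X = (\<Union>i\<in>X. \<Union>(kuhn_tiles_at i))"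

end

theory Submission
  imports Defs
begin

text \<open>
  Split \<open>X - Y\<close> into the points far from \<open>Y\<close> (no point of \<open>Y\<close> within sup-distance 1) and
  the points near \<open>Y\<close>. Every Kuhn simplex containing a lattice point \<open>y\<close> lies in a unit cube
  with corner \<open>y\<close>, and every open unit cube \<open>p + (0,1)\<^sup>d\<close> is covered by the simplices at \<open>p\<close>
  (sort the coordinates). Hence the open unit cubes at the far points are disjoint subsets of
  \<open>\<zeta>(X) - \<zeta>(Y)\<close>, so there are at most \<open>|\<zeta>(X) - \<zeta>(Y)|\<close> of them. A near point \<open>p\<close> lies
  within sup-distance 1 of a point \<open>q \<in> Y\<close> with \<open>val(q) \<ge> 1\<close>; since \<open>P(Y)\<close> bounds the number
  of such \<open>q\<close>, there are at most \<open>3\<^sup>d P(Y)\<close> near points. The argument works for every \<open>d \<ge> 1\<close>.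
\<close>

definition lattice_ball :: "int^'n::finite \<Rightarrow> int \<Rightarrow> (int^'n) set" where
  "lattice_ball c r = {z. \<forall>j. \<bar>z$j - c$j\<bar> \<le> r}"

definition unit_cube :: "int^'n::finite \<Rightarrow> (real^'n) set" where
  "unit_cube p = box (of_intvec p) (of_intvec p + 1)"

lemma of_intvec_nth [simp]: "of_intvec z $ i = real_of_int (z $ i)"
  by (simp add: of_intvec_def)

lemma lattice_ball_sym: "z \<in> lattice_ball c r \<longleftrightarrow> c \<in> lattice_ball z r"
  by (simp add: lattice_ball_def abs_minus_commute)

lemma lattice_ball_translate:
  fixes c :: "int^'n::finite"
  shows "lattice_ball c r = (\<lambda>v. c + v) ` lattice_ball 0 r"
proof (rule set_eqI)
  fix z :: "int^'n"
  show "z \<in> lattice_ball c r \<longleftrightarrow> z \<in> (\<lambda>v. c + v) ` lattice_ball 0 r"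
    by (auto simp: lattice_ball_def image_iff intro: exI[of _ "z - c"])
qed

lemma finite_lattice_ball: "finite (lattice_ball c r)"
proof (rule finite_subset)
  let ?P = "PiE UNIV (\<lambda>i. {c$i - r..c$i + r})"
  show "lattice_ball c r \<subseteq> vec_lambda ` ?P"
  proof
    fix z assume "z \<in> lattice_ball c r"
    then have "vec_nth z \<in> ?P" by (auto simp: lattice_ball_def abs_le_iff) (smt (verit))+
    then show "z \<in> vec_lambda ` ?P" by (rule rev_image_eqI) simp
  qed
  show "finite (vec_lambda ` ?P)" by (intro finite_imageI finite_PiE) auto
qed

lemma card_lattice_ball_translate:
  fixes c :: "int^'n::finite"
  shows "card (lattice_ball c r) = card (lattice_ball (0::int^'n) r)"
  unfolding lattice_ball_translate[of c] by (rule card_image) simp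

lemma card_lattice_ball_pos: "0 < card (lattice_ball c r)" if "0 \<le> r"
proof -
  have "c \<in> lattice_ball c r" using that by (simp add: lattice_ball_def)
  then show ?thesis using finite_lattice_ball card_gt_0_iff by blast
qed

subsection \<open>Kuhn simplices\<close>

lemma kuhn_simplex_chain:
  assumes "x \<in> kuhn_simplex \<sigma>" "i \<le> j" "j < CARD('n::finite)"
  shows "x $ \<sigma> j \<le> (x::real^'n) $ \<sigma> i"
  using assms(2,3)
proof (induction j)
  case (Suc j)
  have "x $ \<sigma> (Suc j) \<le> x $ \<sigma> j"
    using assms(1) Suc.prems by (simp add: kuhn_simplex_def)
  then show ?case using Suc by (cases "i = Suc j") auto
qed simp

lemma kuhn_simplex_subset_unit_cube:
  assumes "bij_betw \<sigma> {..<CARD('n::finite)} (UNIV :: 'n set)"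
  shows "kuhn_simplex \<sigma> \<subseteq> cbox (0::real^'n) 1"
proof
  fix x :: "real^'n" assume x: "x \<in> kuhn_simplex \<sigma>"
  have "0 \<le> x $ j \<and> x $ j \<le> 1" for j
  proof -
    obtain k where k: "k < CARD('n)" "j = \<sigma> k"
      using assms unfolding bij_betw_def by auto
    have "x $ \<sigma> (CARD('n) - 1) \<le> x $ \<sigma> k" "x $ \<sigma> k \<le> x $ \<sigma> 0"
      using kuhn_simplex_chain[OF x] k by auto
    then show ?thesis using x k by (auto simp: kuhn_simplex_def)
  qed
  then show "x \<in> cbox 0 1" by (simp add: mem_box_cart)
qed

lemma kuhn_simplex_restrict:
  fixes \<sigma> :: "nat \<Rightarrow> 'n::finite"
  shows "kuhn_simplex \<sigma> = kuhn_simplex (restrict \<sigma> {..<CARD('n)})"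
  by (auto simp: kuhn_simplex_def restrict_def)

lemma closed_kuhn_simplex: "closed (kuhn_simplex \<sigma> :: (real^'n::finite) set)"
  unfolding kuhn_simplex_def
  by (intro closed_Collect_conj closed_Collect_all closed_Collect_imp closed_Collect_le
        open_Collect_const continuous_intros)

lemma exists_decreasing_enumeration:
  fixes f :: "'n::finite \<Rightarrow> real"
  obtains \<sigma> where "bij_betw \<sigma> {..<CARD('n)} (UNIV :: 'n set)"
    "\<And>i. Suc i < CARD('n) \<Longrightarrow> f (\<sigma> (Suc i)) \<le> f (\<sigma> i)"
proof -
  obtain L where L: "distinct L" "set L = (UNIV :: 'n set)"
    using finite_distinct_list[of "UNIV :: 'n set"] by auto
  define L' where "L' = sort_key (\<lambda>i. - f i) L"
  have L': "distinct L'" "set L' = UNIV" "length L' = CARD('n)"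
    using L distinct_card[of L] by (simp_all add: L'_def)
  have sorted: "sorted (map (\<lambda>i. - f i) L')"
    unfolding L'_def by (rule sorted_sort_key)
  show ?thesis
  proof (rule that)
    show "bij_betw ((!) L') {..<CARD('n)} UNIV"
      by (rule bij_betw_nth) (use L' in auto)
    fix i assume "Suc i < CARD('n)"
    then show "f (L' ! Suc i) \<le> f (L' ! i)"
      using sorted_nth_mono[OF sorted, of i "Suc i"] L'(3) by simp
  qed
qed

lemma kuhn_tile_subset_cube:
  assumes "T \<in> kuhn_tiles"
  obtains z :: "int^'n::finite" where "T \<subseteq> cbox (of_intvec z) (of_intvec z + 1)"
proof -
  from assms obtain z \<sigma> where T: "T = (\<lambda>x. of_intvec z + x) ` kuhn_simplex \<sigma>"
    and \<sigma>: "bij_betw \<sigma> {..<CARD('n)} (UNIV :: 'n set)"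
    by (auto simp: kuhn_tiles_def)
  show ?thesis
  proof
    show "T \<subseteq> cbox (of_intvec z) (of_intvec z + 1)"
      using kuhn_simplex_subset_unit_cube[OF \<sigma>] unfolding T by (fastforce simp: mem_box_cart)
  qed
qed

lemma translated_kuhn_simplex_in_tiles_at:
  assumes "bij_betw \<sigma> {..<CARD('n::finite)} (UNIV :: 'n set)"
  shows "(\<lambda>x. of_intvec z + x) ` kuhn_simplex \<sigma> \<in> kuhn_tiles_at (z :: int^'n)"
proof -
  have "(0::real^'n) \<in> kuhn_simplex \<sigma>" by (simp add: kuhn_simplex_def)
  then have "of_intvec z \<in> (\<lambda>x. of_intvec z + x) ` kuhn_simplex \<sigma>"
    by (rule rev_image_eqI) simp
  then show ?thesis using assms unfolding kuhn_tiles_at_def kuhn_tiles_def by blast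
qed

lemma finite_kuhn_tiles_at: "finite (kuhn_tiles_at (i :: int^'n::finite))"
proof -
  let ?S = "PiE {..<CARD('n)} (\<lambda>_. UNIV :: 'n set)"
  let ?tile = "\<lambda>(z, \<sigma>). (\<lambda>x. of_intvec z + x) ` kuhn_simplex \<sigma>"
  have "kuhn_tiles_at i \<subseteq> ?tile ` (lattice_ball i 1 \<times> ?S)"
  proof
    fix T assume T: "T \<in> kuhn_tiles_at i"
    then obtain z \<sigma> where T_def: "T = (\<lambda>x. of_intvec z + x) ` kuhn_simplex \<sigma>"
      and \<sigma>: "bij_betw \<sigma> {..<CARD('n)} (UNIV :: 'n set)"
      by (auto simp: kuhn_tiles_at_def kuhn_tiles_def)
    obtain y where y: "y \<in> kuhn_simplex \<sigma>" "of_intvec i = of_intvec z + y"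
      using T T_def by (auto simp: kuhn_tiles_at_def)
    have "z \<in> lattice_ball i 1"
    proof (unfold lattice_ball_def, intro CollectI allI)
      fix j
      have "0 \<le> y$j" "y$j \<le> 1"
        using kuhn_simplex_subset_unit_cube[OF \<sigma>] y(1) by (auto simp: mem_box_cart)
      moreover have "real_of_int (i$j) = real_of_int (z$j) + y$j"
        using arg_cong[OF y(2), of "\<lambda>v. v$j"] by simp
      ultimately show "\<bar>z$j - i$j\<bar> \<le> 1" by linarith
    qed
    then show "T \<in> ?tile ` (lattice_ball i 1 \<times> ?S)"
      unfolding T_def by (intro rev_image_eqI[of "(z, restrict \<sigma> {..<CARD('n)})"])
        (auto simp flip: kuhn_simplex_restrict)
  qed
  moreover have "finite (lattice_ball i 1 \<times> ?S)"
    by (intro finite_cartesian_product finite_PiE finite_lattice_ball) auto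
  ultimately show ?thesis by (meson finite_imageI finite_subset)
qed

subsection \<open>Unit cubes\<close>

lemma lmeasurable_unit_cube: "unit_cube p \<in> lmeasurable"
  by (simp add: unit_cube_def lmeasurable_box)

lemma measure_unit_cube: "measure lebesgue (unit_cube (p::int^'n::finite)) = 1"
proof -
  have one: "(1::real^'n) \<bullet> b = 1" if "b \<in> Basis" for b
    using that by (auto simp: Basis_vec_def inner_axis)
  have "measure lebesgue (unit_cube p) = measure lborel (unit_cube p)"
    unfolding unit_cube_def by simp
  also have "\<dots> = prod ((\<bullet>) (of_intvec p + 1 - of_intvec p)) Basis"
    unfolding unit_cube_def by (rule measure_lborel_box) (simp add: inner_add_left one)
  also have "\<dots> = 1" by (simp add: one prod.neutral)
  finally show ?thesis .
qed

lemma disjoint_unit_cubes: "disjoint_family (unit_cube :: int^'n::finite \<Rightarrow> _)"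
  unfolding disjoint_family_on_def
proof (intro ballI impI)
  fix p q :: "int^'n" assume "p \<noteq> q"
  then obtain j where j: "p$j \<noteq> q$j" by (auto simp: vec_eq_iff)
  show "unit_cube p \<inter> unit_cube q = {}"
  proof (rule ccontr)
    assume "unit_cube p \<inter> unit_cube q \<noteq> {}"
    then obtain x where "x \<in> unit_cube p" "x \<in> unit_cube q" by blast
    then have "real_of_int (p$j) < x$j" "x$j < real_of_int (p$j) + 1"
      "real_of_int (q$j) < x$j" "x$j < real_of_int (q$j) + 1"
      by (auto simp: unit_cube_def mem_box_cart)
    then have "\<bar>p$j - q$j\<bar> < 1" by linarith
    then show False using j by linarith
  qed
qed

lemma measure_UN_unit_cubes:
  assumes "finite G"
  shows "measure lebesgue (\<Union>p\<in>G. unit_cube p) = real (card (G :: (int^'n::finite) set))"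
proof -
  have "measure lebesgue (\<Union>p\<in>G. unit_cube p) = (\<Sum>p\<in>G. measure lebesgue (unit_cube p))"
    using lmeasurable_unit_cube fmeasurableD2
    by (intro measure_finite_Union[OF assms _ disjoint_family_on_mono[OF _ disjoint_unit_cubes]])
      (auto simp only: infinity_ennreal_def intro: fmeasurableD)
  then show ?thesis by (simp add: measure_unit_cube)
qed

subsection \<open>The set \<open>\<zeta>\<close>\<close>

lemma compact_zeta: "finite X \<Longrightarrow> compact (zeta (X :: (int^'n::finite) set))"
  unfolding zeta_def
proof (intro compact_UN compact_Union finite_kuhn_tiles_at)
  fix T i assume "T \<in> kuhn_tiles_at (i::int^'n)"
  then obtain z \<sigma> where T: "T = (\<lambda>x. of_intvec z + x) ` kuhn_simplex \<sigma>"
    and \<sigma>: "bij_betw \<sigma> {..<CARD('n)} (UNIV :: 'n set)"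
    by (auto simp: kuhn_tiles_at_def kuhn_tiles_def)
  have "bounded (kuhn_simplex \<sigma>)"
    using kuhn_simplex_subset_unit_cube[OF \<sigma>] bounded_cbox bounded_subset by blast
  then show "compact T"
    unfolding T compact_eq_bounded_closed
    using closed_translation[OF closed_kuhn_simplex] bounded_translation by blast
qed

lemma lmeasurable_zeta: "finite X \<Longrightarrow> zeta (X :: (int^'n::finite) set) \<in> lmeasurable"
  by (simp add: compact_zeta lmeasurable_compact)

lemma unit_cube_subset_zeta:
  assumes "p \<in> X"
  shows "unit_cube p \<subseteq> zeta (X :: (int^'n::finite) set)"
proof
  fix x assume x: "x \<in> unit_cube p"
  define y where "y = x - of_intvec p"
  have y: "0 < y$j" "y$j < 1" for j
    using x unfolding unit_cube_def mem_box_cart by (simp_all add: y_def) (smt (verit))+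
  obtain \<sigma> where \<sigma>: "bij_betw \<sigma> {..<CARD('n)} (UNIV :: 'n set)"
    and sorted: "\<And>i. Suc i < CARD('n) \<Longrightarrow> y $ \<sigma> (Suc i) \<le> y $ \<sigma> i"
    using exists_decreasing_enumeration[of "vec_nth y"] by blast
  have "y \<in> kuhn_simplex \<sigma>"
    using y sorted by (auto simp: kuhn_simplex_def less_imp_le)
  then have "x \<in> (\<lambda>x. of_intvec p + x) ` kuhn_simplex \<sigma>"
    by (rule rev_image_eqI) (simp add: y_def)
  then show "x \<in> zeta X"
    using translated_kuhn_simplex_in_tiles_at[OF \<sigma>, of p] assms unfolding zeta_def by blast
qed

lemma unit_cube_disjoint_zeta:
  assumes "Y \<inter> lattice_ball p 1 = {}"
  shows "unit_cube p \<inter> zeta (Y :: (int^'n::finite) set) = {}"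
proof (rule ccontr)
  assume "unit_cube p \<inter> zeta Y \<noteq> {}"
  then obtain x y T where x: "x \<in> unit_cube p" "x \<in> T"
    and y: "y \<in> Y" "T \<in> kuhn_tiles" "of_intvec y \<in> T"
    by (auto simp: zeta_def kuhn_tiles_at_def)
  obtain z :: "int^'n" where z: "T \<subseteq> cbox (of_intvec z) (of_intvec z + 1)"
    using kuhn_tile_subset_cube[OF y(2)] by blast
  have "\<bar>y$j - p$j\<bar> \<le> 1" for j
  proof -
    have "real_of_int (z$j) \<le> x$j" "x$j \<le> real_of_int (z$j) + 1"
      "real_of_int (z$j) \<le> real_of_int (y$j)" "real_of_int (y$j) \<le> real_of_int (z$j) + 1"
      using z x(2) y(3) by (auto simp: mem_box_cart)
    moreover have "real_of_int (p$j) < x$j" "x$j < real_of_int (p$j) + 1"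
      using x(1) by (auto simp: unit_cube_def mem_box_cart)
    ultimately have "\<bar>y$j - p$j\<bar> < 2" by linarith
    then show ?thesis by linarith
  qed
  then show False using assms y(1) by (auto simp: lattice_ball_def)
qed

subsection \<open>Boundary points\<close>

lemma lattice_val_pos:
  assumes "r \<notin> Y" "norm (of_intvec q - of_intvec r) = (1::real)"
  shows "0 < lattice_val Y (q :: int^'n::finite)"
proof -
  let ?S = "{r. r \<notin> Y \<and> norm (of_intvec q - of_intvec r) = (1::real)}"
  have "?S \<subseteq> lattice_ball q 1"
  proof (clarsimp simp: lattice_ball_def)
    fix r' :: "int^'n" and j assume "norm (of_intvec q - of_intvec r') = (1::real)"
    then have "\<bar>(of_intvec q - of_intvec r') $ j\<bar> \<le> (1::real)"
      by (metis component_le_norm_cart)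
    then show "\<bar>r'$j - q$j\<bar> \<le> 1" by simp
  qed
  then have "finite ?S" using finite_lattice_ball finite_subset by blast
  then show ?thesis using assms by (auto simp: lattice_val_def card_gt_0_iff)
qed

lemma norm_axis: "norm (axis i (a::real) :: real^'n::finite) = \<bar>a\<bar>"
proof -
  have "axis i a = a *\<^sub>R (axis i 1 :: real^'n)" by (simp add: vec_eq_iff axis_def)
  then show ?thesis by simp
qed

text \<open>Take \<open>q \<in> Y\<close> near \<open>p\<close> closest to \<open>p\<close> in \<open>\<ell>\<^sup>1\<close>; moving one coordinate of \<open>q\<close> to that
  of \<open>p\<close> is a unit step that stays near \<open>p\<close> and gets closer, so it leaves \<open>Y\<close>.\<close>
lemma exists_boundary_point_near:
  fixes Y :: "(int^'n::finite) set"
  assumes "p \<notin> Y" "y \<in> Y \<inter> lattice_ball p 1"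
  shows "\<exists>q \<in> Y \<inter> lattice_ball p 1. 0 < lattice_val Y q"
proof -
  define dist1 where "dist1 y = (\<Sum>j\<in>UNIV. nat \<bar>y$j - p$j\<bar>)" for y :: "int^'n"
  obtain q where q: "q \<in> Y \<inter> lattice_ball p 1"
    and least: "\<And>y. y \<in> Y \<inter> lattice_ball p 1 \<Longrightarrow> dist1 q \<le> dist1 y"
    using ex_has_least_nat[of "\<lambda>y. y \<in> Y \<inter> lattice_ball p 1" y dist1] assms(2) by blast
  have "q \<noteq> p" using q assms(1) by auto
  then obtain i where i: "q$i \<noteq> p$i" by (auto simp: vec_eq_iff)
  have qi: "\<bar>q$i - p$i\<bar> = 1" using q i by (auto simp: lattice_ball_def) (smt (verit))
  define r where "r = (\<chi> j. if j = i then p$j else q$j)"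
  have "dist1 r < dist1 q"
    unfolding dist1_def by (rule sum_strict_mono_ex1) (use i in \<open>auto simp: r_def\<close>)
  moreover have "r \<in> lattice_ball p 1" using q by (auto simp: lattice_ball_def r_def)
  ultimately have "r \<notin> Y" using least by fastforce
  moreover have "of_intvec q - of_intvec r = (axis i (real_of_int (q$i - p$i)) :: real^'n)"
    by (simp add: vec_eq_iff axis_def r_def)
  then have "norm (of_intvec q - of_intvec r) = (1::real)"
    using qi by (simp add: norm_axis)
  ultimately show ?thesis using q lattice_val_pos by blast
qed

lemma card_boundary_le_perimeter:
  assumes "finite Y"
  shows "card {q \<in> Y. 0 < lattice_val Y q} \<le> lattice_perimeter (Y :: (int^'n::finite) set)"
proof -
  have "card {q \<in> Y. 0 < lattice_val Y q} = (\<Sum>q\<in>{q \<in> Y. 0 < lattice_val Y q}. 1)" by simp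
  also have "\<dots> \<le> (\<Sum>q\<in>{q \<in> Y. 0 < lattice_val Y q}. lattice_val Y q)"
    by (intro sum_mono) auto
  also have "\<dots> \<le> (\<Sum>q\<in>Y. lattice_val Y q)" by (intro sum_mono2 assms) auto
  finally show ?thesis by (simp add: lattice_perimeter_def)
qed

lemma card_far_le_measure:
  fixes X Y :: "(int^'n::finite) set"
  assumes "finite X" "finite Y"
  shows "real (card {p \<in> X - Y. Y \<inter> lattice_ball p 1 = {}}) \<le> measure lebesgue (zeta X - zeta Y)"
proof -
  define F where "F = {p \<in> X - Y. Y \<inter> lattice_ball p 1 = {}}"
  have "finite F" using assms(1) by (simp add: F_def)
  have "unit_cube p \<subseteq> zeta X - zeta Y" if "p \<in> F" for p
    using that unit_cube_subset_zeta[of p X] unit_cube_disjoint_zeta[of Y p] by (auto simp: F_def)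
  then have "(\<Union>p\<in>F. unit_cube p) \<subseteq> zeta X - zeta Y" by blast
  moreover have "(\<Union>p\<in>F. unit_cube p) \<in> sets lebesgue"
    using \<open>finite F\<close> lmeasurable_unit_cube by (intro sets.finite_UN) auto
  moreover have "zeta X - zeta Y \<in> lmeasurable"
    using assms by (intro fmeasurable_Diff lmeasurable_zeta fmeasurableD)
  ultimately have "measure lebesgue (\<Union>p\<in>F. unit_cube p) \<le> measure lebesgue (zeta X - zeta Y)"
    by (rule measure_mono_fmeasurable)
  then show ?thesis using \<open>finite F\<close> by (simp add: measure_UN_unit_cubes F_def)
qed

lemma card_near_le_perimeter:
  fixes X Y :: "(int^'n::finite) set"
  assumes "finite Y"
  shows "card {p \<in> X - Y. Y \<inter> lattice_ball p 1 \<noteq> {}}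
           \<le> card (lattice_ball (0::int^'n) 1) * lattice_perimeter Y"
proof -
  define B where "B = {q \<in> Y. 0 < lattice_val Y q}"
  have "finite B" using assms by (simp add: B_def)
  have "{p \<in> X - Y. Y \<inter> lattice_ball p 1 \<noteq> {}} \<subseteq> (\<Union>q\<in>B. lattice_ball q 1)"
  proof
    fix p assume "p \<in> {p \<in> X - Y. Y \<inter> lattice_ball p 1 \<noteq> {}}"
    then obtain q where "q \<in> Y \<inter> lattice_ball p 1" "0 < lattice_val Y q"
      using exists_boundary_point_near[of p Y] by auto
    then show "p \<in> (\<Union>q\<in>B. lattice_ball q 1)"
      by (auto simp: B_def lattice_ball_sym[of q])
  qed
  then have "card {p \<in> X - Y. Y \<inter> lattice_ball p 1 \<noteq> {}} \<le> card (\<Union>q\<in>B. lattice_ball q 1)"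
    using \<open>finite B\<close> by (intro card_mono) (auto intro: finite_lattice_ball)
  also have "\<dots> \<le> (\<Sum>q\<in>B. card (lattice_ball q 1))" by (rule card_UN_le[OF \<open>finite B\<close>])
  also have "\<dots> = (\<Sum>q\<in>B. card (lattice_ball (0::int^'n) 1))"
    by (intro sum.cong refl card_lattice_ball_translate)
  also have "\<dots> \<le> card (lattice_ball (0::int^'n) 1) * lattice_perimeter Y"
    using card_boundary_le_perimeter[OF assms] by (simp add: B_def)
  finally show ?thesis .
qed

lemma card_diff_le_measure_zeta_diff:
  fixes X Y :: "(int^'n::finite) set"
  assumes "finite X" "finite Y"
  shows "real (card (X - Y)) \<le> measure lebesgue (zeta X - zeta Y)
           + real (card (lattice_ball (0::int^'n) 1)) * real (lattice_perimeter Y)"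
proof -
  define F where "F = {p \<in> X - Y. Y \<inter> lattice_ball p 1 = {}}"
  define N where "N = {p \<in> X - Y. Y \<inter> lattice_ball p 1 \<noteq> {}}"
  have "X - Y = F \<union> N" "F \<inter> N = {}" "finite F" "finite N"
    using assms(1) by (auto simp: F_def N_def)
  then have "real (card (X - Y)) = real (card F) + real (card N)"
    by (simp add: card_Un_disjoint)
  moreover have "real (card N) \<le> real (card (lattice_ball (0::int^'n) 1)) * real (lattice_perimeter Y)"
    using card_near_le_perimeter[OF assms(2), of X] unfolding N_def of_nat_mult[symmetric] of_nat_le_iff .
  ultimately show ?thesis
    using card_far_le_measure[OF assms] unfolding F_def by linarith
qed

lemma measure_sym_diff:
  assumes "A \<in> fmeasurable M" "B \<in> fmeasurable M"
  shows "measure M ((A - B) \<union> (B - A)) = measure M (A - B) + measure M (B - A)"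
proof -
  have "measure M ((A - B) \<union> (B - A)) = measure M (A - B) + measure M ((B - A) - (A - B))"
    using assms by (intro measure_Un2 fmeasurable_Diff fmeasurableD)
  also have "(B - A) - (A - B) = B - A" by blast
  finally show ?thesis .
qed

theorem mainTheorem13:
  assumes "CARD('n::finite) \<ge> 2"
  shows "\<exists>C>0. \<forall>X Y :: (int^'n) set. finite X \<longrightarrow> finite Y \<longrightarrow>
     real (card (X - Y)) \<le> measure lebesgue (zeta X - zeta Y) + C * real (lattice_perimeter Y)
     \<and> real (card ((X - Y) \<union> (Y - X)))
         \<le> measure lebesgue ((zeta X - zeta Y) \<union> (zeta Y - zeta X))
           + C * (real (lattice_perimeter X) + real (lattice_perimeter Y))"
proof (intro exI[of _ "real (card (lattice_ball (0::int^'n) 1))"] conjI allI impI)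
  show "0 < real (card (lattice_ball (0::int^'n) 1))" by (simp add: card_lattice_ball_pos)
  fix X Y :: "(int^'n) set" assume X: "finite X" and Y: "finite Y"
  note XY = card_diff_le_measure_zeta_diff[OF X Y] and YX = card_diff_le_measure_zeta_diff[OF Y X]
  then show "real (card (X - Y)) \<le> measure lebesgue (zeta X - zeta Y)
      + real (card (lattice_ball (0::int^'n) 1)) * real (lattice_perimeter Y)" by blast
  have "card ((X - Y) \<union> (Y - X)) = card (X - Y) + card (Y - X)"
    using X Y by (intro card_Un_disjoint) auto
  moreover have "measure lebesgue ((zeta X - zeta Y) \<union> (zeta Y - zeta X))
      = measure lebesgue (zeta X - zeta Y) + measure lebesgue (zeta Y - zeta X)"
    using X Y by (intro measure_sym_diff lmeasurable_zeta)
  ultimately show "real (card ((X - Y) \<union> (Y - X)))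
      \<le> measure lebesgue ((zeta X - zeta Y) \<union> (zeta Y - zeta X))
        + real (card (lattice_ball (0::int^'n) 1))
          * (real (lattice_perimeter X) + real (lattice_perimeter Y))"
    using XY YX by (simp add: distrib_left)
qed

end
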